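(* Let $(X,T)$ be a topological dynamical system and $f\in C(X,\mathbb{R})$. Then for each $x\in X$ and $\epsilon>0$, $$P_s(T,f,x,\epsilon)=\sup_{\mathcal{U}\in\mathcal{C}_X^o}\limsup_{n\to+\infty}\frac1n\log P_n(T,f,\mathcal{U},T^{-n}W^s_\epsilon(x,T)).$$
   Context: A TDS is a compact metric space $(X,d)$ with a homeomorphism $T$. $W^s_\epsilon(x,T)=\{y: d(T^nx,T^ny)\le\epsilon\ \forall n\ge0\}$. $f_n=\sum_{i=0}^{n-1}f\circ T^i$, $d_n(x,y)=\max_{0\le i<n}d(T^ix,T^iy)$, $P_n(T,f,\delta,K)=\sup\sum_{x\in E}\exp f_n(x)$ over $E\subseteq K$ with distinct points at $d_n$-distance $>\delta$, and $P_s(T,f,x,\epsilon)=\lim_{\delta\to0}\limsup_n\frac1n\log P_n(T,f,\delta,T^{-n}W^s_\epsilon(x,T))$. $\mathcal{C}_X$ = finite Borel covers, $\mathcal{C}^o_X$ = finite open covers; $\mathcal{V}\succeq\mathcal{U}$ means refinement; $\mathcal{U}_0^{n-1}=\bigvee_{i=0}^{n-1}T^{-i}\mathcal{U}$; $P_n(T,f,\mathcal{U},K)=\inf\{\sum_{V\in\mathcal{V}}\sup_{x\in V\cap K}\exp f_n(x):\mathcal{V}\in\mathcal{C}_X,\mathcal{V}\succeq\mathcal{U}_0^{n-1}\}$ (empty intersections contribute $0$). *)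

theory Defs
  imports "HOL-Analysis.Analysis"
begin

definition TDS :: "'a::metric_space set \<Rightarrow> ('a \<Rightarrow> 'a) \<Rightarrow> bool" where
  "TDS X T \<longleftrightarrow> compact X \<and> (\<exists>g. homeomorphism X X T g)"

definition preim :: "'a set \<Rightarrow> ('a \<Rightarrow> 'a) \<Rightarrow> nat \<Rightarrow> 'a set \<Rightarrow> 'a set" where
  "preim X T n K = {y \<in> X. (T ^^ n) y \<in> K}"

definition stable_set :: "'a::metric_space set \<Rightarrow> ('a \<Rightarrow> 'a) \<Rightarrow> real \<Rightarrow> 'a \<Rightarrow> 'a set" where
  "stable_set X T \<epsilon> x = {y \<in> X. \<forall>n. dist ((T ^^ n) x) ((T ^^ n) y) \<le> \<epsilon>}"

definition birk :: "('a \<Rightarrow> 'a) \<Rightarrow> ('a \<Rightarrow> real) \<Rightarrow> nat \<Rightarrow> 'a \<Rightarrow> real" where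
  "birk T f n x = (\<Sum>i<n. f ((T ^^ i) x))"

text \<open>Bowen metric d_n (used for n \<ge> 1).\<close>
definition bowen_dist :: "('a::metric_space \<Rightarrow> 'a) \<Rightarrow> nat \<Rightarrow> 'a \<Rightarrow> 'a \<Rightarrow> real" where
  "bowen_dist T n x y = Max ((\<lambda>i. dist ((T ^^ i) x) ((T ^^ i) y)) ` {..<n})"

definition separated :: "('a::metric_space \<Rightarrow> 'a) \<Rightarrow> nat \<Rightarrow> real \<Rightarrow> 'a set \<Rightarrow> bool" where
  "separated T n \<delta> E \<longleftrightarrow> (\<forall>x\<in>E. \<forall>y\<in>E. x \<noteq> y \<longrightarrow> bowen_dist T n x y > \<delta>)"

definition Pn_sep :: "('a::metric_space \<Rightarrow> 'a) \<Rightarrow> ('a \<Rightarrow> real) \<Rightarrow> nat \<Rightarrow> real \<Rightarrow> 'a set \<Rightarrow> real" where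
  "Pn_sep T f n \<delta> K = Sup {(\<Sum>x\<in>E. exp (birk T f n x)) | E. finite E \<and> E \<subseteq> K \<and> separated T n \<delta> E}"

definition Ps :: "'a::metric_space set \<Rightarrow> ('a \<Rightarrow> 'a) \<Rightarrow> ('a \<Rightarrow> real) \<Rightarrow> 'a \<Rightarrow> real \<Rightarrow> ereal" where
  "Ps X T f x \<epsilon> = Lim (at_right (0::real))
     (\<lambda>\<delta>. limsup (\<lambda>n. ereal (ln (Pn_sep T f n \<delta> (preim X T n (stable_set X T \<epsilon> x))) / real n)))"

definition borel_covers :: "'a::topological_space set \<Rightarrow> 'a set set set" where
  "borel_covers X = {C. finite C \<and> (\<forall>A\<in>C. A \<in> sets borel \<and> A \<subseteq> X) \<and> \<Union>C = X}"

definition open_covers :: "'a::topological_space set \<Rightarrow> 'a set set set" where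
  "open_covers X = {C. finite C \<and> (\<forall>A\<in>C. openin (top_of_set X) A) \<and> \<Union>C = X}"

definition refines :: "'a set set \<Rightarrow> 'a set set \<Rightarrow> bool" where
  "refines V U \<longleftrightarrow> (\<forall>A\<in>V. \<exists>B\<in>U. A \<subseteq> B)"

definition join_cover :: "'a set \<Rightarrow> ('a \<Rightarrow> 'a) \<Rightarrow> nat \<Rightarrow> 'a set set \<Rightarrow> 'a set set" where
  "join_cover X T n U = {X \<inter> (\<Inter>i<n. preim X T i (g i)) | g. \<forall>i<n. g i \<in> U}"

definition sup_exp :: "('a \<Rightarrow> 'a) \<Rightarrow> ('a \<Rightarrow> real) \<Rightarrow> nat \<Rightarrow> 'a set \<Rightarrow> real" where
  "sup_exp T f n A = (if A = {} then 0 else Sup ((\<lambda>x. exp (birk T f n x)) ` A))"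

definition Pn_cov :: "'a::topological_space set \<Rightarrow> ('a \<Rightarrow> 'a) \<Rightarrow> ('a \<Rightarrow> real) \<Rightarrow> nat \<Rightarrow> 'a set set \<Rightarrow> 'a set \<Rightarrow> real" where
  "Pn_cov X T f n U K = Inf {(\<Sum>V\<in>C. sup_exp T f n (V \<inter> K)) | C.
      C \<in> borel_covers X \<and> refines C (join_cover X T n U)}"

end

theory Submission
  imports Defs
begin

text \<open>
  If every member of an open cover U has diameter less than \<delta>, every member of a
  refinement of the join U_0^{n-1} contains at most one point of an (n,\<delta>)-separated set,
  so P_n(T,f,\<delta>,K) \<le> P_n(T,f,U,K). Conversely, let \<delta> be smaller than a Lebesgue number of U
  and than the \<eta>-modulus of uniform continuity of f. A maximal (n,\<delta>)-separated subset E
  of K is (n,\<delta>)-spanning, the closed Bowen balls around E refine the join, and f_n varies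
  by at most n\<eta> on each of them, so P_n(T,f,U,K) \<le> exp(n\<eta>) P_n(T,f,\<delta>,K). Passing to
  limsup (1/n) log squeezes the separated-set pressure at scale \<delta> onto the supremum over
  open covers as \<delta> \<rightarrow> 0.
\<close>

lemma funpow_image_subset: "T ` X \<subseteq> X \<Longrightarrow> (T ^^ i) ` X \<subseteq> X"
  by (induction i) auto

lemma funpow_image_eq: "T ` X = X \<Longrightarrow> (T ^^ i) ` X = X"
  by (induction i) (simp_all flip: image_image)

lemma continuous_on_funpow:
  assumes "continuous_on X T" and "T ` X \<subseteq> X"
  shows "continuous_on X (T ^^ i)"
proof (induction i)
  case (Suc i)
  have "continuous_on X (T \<circ> (T ^^ i))"
    using continuous_on_subset[OF assms(1) funpow_image_subset[OF assms(2)]]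
    by (rule continuous_on_compose[OF Suc])
  then show ?case by simp
qed simp

lemma limsup_ln_div_le:
  fixes p q :: "nat \<Rightarrow> real"
  assumes "\<forall>\<^sub>F n in sequentially. 0 < p n \<and> 0 < q n \<and> p n \<le> exp (real n * \<eta>) * q n"
  shows "limsup (\<lambda>n. ereal (ln (p n) / real n)) \<le> ereal \<eta> + limsup (\<lambda>n. ereal (ln (q n) / real n))"
proof -
  have "\<forall>\<^sub>F n in sequentially. ereal (ln (p n) / real n) \<le> ereal \<eta> + ereal (ln (q n) / real n)"
    using assms eventually_gt_at_top[of 0]
  proof eventually_elim
    case (elim n)
    then have "ln (p n) \<le> ln (exp (real n * \<eta>) * q n)" by simp
    also have "\<dots> = real n * \<eta> + ln (q n)" using elim by (simp add: ln_mult)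
    finally have "ln (p n) / real n \<le> (real n * \<eta> + ln (q n)) / real n"
      by (simp add: divide_right_mono)
    with elim show ?case by (simp add: add_divide_distrib)
  qed
  then have "limsup (\<lambda>n. ereal (ln (p n) / real n)) \<le> limsup (\<lambda>n. ereal \<eta> + ereal (ln (q n) / real n))"
    by (rule Limsup_mono)
  also have "\<dots> = ereal \<eta> + limsup (\<lambda>n. ereal (ln (q n) / real n))"
    by (rule Limsup_add_ereal_left) simp_all
  finally show ?thesis .
qed

lemma tendsto_at_right_zero_SUP:
  fixes L :: "real \<Rightarrow> ereal" and a :: "'i \<Rightarrow> ereal"
  assumes upper: "\<And>\<delta>. \<delta> > 0 \<Longrightarrow> L \<delta> \<le> (SUP i\<in>I. a i)"
    and approx: "\<And>i \<eta>. i \<in> I \<Longrightarrow> \<eta> > 0 \<Longrightarrow> \<forall>\<^sub>F \<delta> in at_right 0. a i \<le> ereal \<eta> + L \<delta>"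
  shows "(L \<longlongrightarrow> (SUP i\<in>I. a i)) (at_right 0)"
  unfolding order_tendsto_iff
proof (intro conjI allI impI)
  fix u assume "(SUP i\<in>I. a i) < u"
  then show "\<forall>\<^sub>F \<delta> in at_right 0. L \<delta> < u"
    using upper unfolding eventually_at_right_field
    by (intro exI[of _ 1]) (auto intro: le_less_trans)
next
  fix l assume "l < (SUP i\<in>I. a i)"
  then obtain i where i: "i \<in> I" "l < a i" by (auto simp: less_SUP_iff)
  obtain r0 r1 where r: "l < ereal r0" "r0 < r1" "ereal r1 < a i"
    by (metis i(2) ereal_dense2 ereal_less(2) less_ereal.simps(1))
  have "\<forall>\<^sub>F \<delta> in at_right 0. a i \<le> ereal (r1 - r0) + L \<delta>"
    using r(2) by (intro approx i(1)) simp
  then show "\<forall>\<^sub>F \<delta> in at_right 0. l < L \<delta>"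
  proof eventually_elim
    case (elim \<delta>)
    show ?case
    proof (rule ccontr)
      assume "\<not> l < L \<delta>"
      then have "ereal (r1 - r0) + L \<delta> \<le> ereal (r1 - r0) + ereal r0"
        using r(1) by (intro add_left_mono) simp
      with elim r(3) show False by simp
    qed
  qed
qed

lemma sup_exp_le:
  assumes "\<And>y. y \<in> A \<Longrightarrow> exp (birk T f n y) \<le> c" and "0 \<le> c"
  shows "sup_exp T f n A \<le> c"
  using assms unfolding sup_exp_def by (auto intro: cSup_least)

definition fine_cover :: "real \<Rightarrow> 'a::metric_space set set \<Rightarrow> bool" where
  "fine_cover \<delta> U \<longleftrightarrow> (\<forall>A\<in>U. \<forall>a\<in>A. \<forall>b\<in>A. dist a b < \<delta>)"

lemma ex_fine_open_cover:
  fixes X :: "'a::metric_space set"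
  assumes "compact X" and "\<delta> > 0"
  obtains U where "U \<in> open_covers X" and "fine_cover \<delta> U"
proof -
  obtain D where D: "D \<subseteq> X" "finite D" "X \<subseteq> (\<Union>z\<in>D. ball z (\<delta>/2))"
    using compactE_image[OF assms(1), of X "\<lambda>z. ball z (\<delta>/2)"] assms(2) by force
  let ?U = "(\<lambda>z. X \<inter> ball z (\<delta>/2)) ` D"
  have "?U \<in> open_covers X"
    unfolding open_covers_def using D by (auto simp: openin_open_Int)
  moreover have "fine_cover \<delta> ?U"
    unfolding fine_cover_def
  proof (intro ballI)
    fix A a b assume "A \<in> ?U" "a \<in> A" "b \<in> A"
    then obtain z where "dist z a < \<delta>/2" "dist z b < \<delta>/2" by auto
    then show "dist a b < \<delta>" by (metis dist_commute dist_triangle_half_l)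
  qed
  ultimately show ?thesis by (rule that)
qed

lemma open_cover_Lebesgue_number:
  fixes X :: "'a::metric_space set"
  assumes "compact X" and "U \<in> open_covers X"
  obtains e where "e > 0" and "\<And>z. z \<in> X \<Longrightarrow> \<exists>A\<in>U. X \<inter> ball z e \<subseteq> A"
proof -
  let ?G = "{G. open G \<and> X \<inter> G \<in> U}"
  have "X \<subseteq> \<Union>?G"
  proof
    fix z assume "z \<in> X"
    then obtain A where A: "A \<in> U" "z \<in> A" using assms(2) unfolding open_covers_def by blast
    then obtain G where "open G" "A = X \<inter> G"
      using assms(2) unfolding open_covers_def openin_open by blast
    with A show "z \<in> \<Union>?G" by blast
  qed
  then obtain e where "e > 0" and e: "\<And>z. z \<in> X \<Longrightarrow> \<exists>G\<in>?G. ball z e \<subseteq> G"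
    using Heine_Borel_lemma[OF assms(1)] by (metis (no_types, lifting) mem_Collect_eq)
  have "\<exists>A\<in>U. X \<inter> ball z e \<subseteq> A" if "z \<in> X" for z
    using e[OF that] by blast
  with \<open>e > 0\<close> show ?thesis by (rule that)
qed

lemma finite_join_cover:
  assumes "finite U"
  shows "finite (join_cover X T n U)"
proof -
  have "join_cover X T n U \<subseteq> (\<lambda>g. X \<inter> (\<Inter>i<n. preim X T i (g i))) ` (\<Pi>\<^sub>E i\<in>{..<n}. U)"
  proof
    fix J assume "J \<in> join_cover X T n U"
    then obtain g where "J = X \<inter> (\<Inter>i<n. preim X T i (g i))" and "\<forall>i<n. g i \<in> U"
      unfolding join_cover_def by auto
    then have "J = X \<inter> (\<Inter>i<n. preim X T i (restrict g {..<n} i))"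
      and "restrict g {..<n} \<in> (\<Pi>\<^sub>E i\<in>{..<n}. U)" by auto
    then show "J \<in> (\<lambda>g. X \<inter> (\<Inter>i<n. preim X T i (g i))) ` (\<Pi>\<^sub>E i\<in>{..<n}. U)" by blast
  qed
  then show ?thesis using assms by (meson finite_PiE finite_subset finite_imageI finite_lessThan)
qed

lemma join_cover_covers:
  assumes TX: "T ` X \<subseteq> X" and U: "\<Union>U = X"
  shows "\<Union>(join_cover X T n U) = X"
proof
  show "\<Union>(join_cover X T n U) \<subseteq> X" unfolding join_cover_def by auto
  show "X \<subseteq> \<Union>(join_cover X T n U)"
  proof
    fix y assume y: "y \<in> X"
    have "\<exists>A\<in>U. (T ^^ i) y \<in> A" for i
      using funpow_image_subset[OF TX] y U by blast
    then obtain g where g: "\<And>i. g i \<in> U \<and> (T ^^ i) y \<in> g i" by metis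
    then have "y \<in> X \<inter> (\<Inter>i<n. preim X T i (g i))"
      and "X \<inter> (\<Inter>i<n. preim X T i (g i)) \<in> join_cover X T n U"
      using y unfolding preim_def join_cover_def by auto
    then show "y \<in> \<Union>(join_cover X T n U)" by blast
  qed
qed

lemma bowen_dist_lt_join_cover:
  assumes "fine_cover \<delta> U" and "J \<in> join_cover X T n U" and "n > 0"
    and "y \<in> J" and "z \<in> J"
  shows "bowen_dist T n y z < \<delta>"
proof -
  obtain g where J: "J = X \<inter> (\<Inter>i<n. preim X T i (g i))" and g: "\<forall>i<n. g i \<in> U"
    using assms(2) unfolding join_cover_def by auto
  have "dist ((T ^^ i) y) ((T ^^ i) z) < \<delta>" if "i < n" for i
    using assms(1,4,5) g J that unfolding fine_cover_def preim_def by auto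
  then show ?thesis
    using \<open>n > 0\<close> unfolding bowen_dist_def by (subst Max_less_iff) auto
qed

lemma separated_inj_into_refinement:
  assumes "fine_cover \<delta> U" and "n > 0" and "E \<subseteq> \<Union>C"
    and "refines C (join_cover X T n U)" and "separated T n \<delta> E"
  obtains h where "inj_on h E" and "h ` E \<subseteq> C" and "\<And>y. y \<in> E \<Longrightarrow> y \<in> h y"
proof -
  have "\<forall>y\<in>E. \<exists>V. V \<in> C \<and> y \<in> V" using assms(3) by blast
  then obtain h where h: "\<And>y. y \<in> E \<Longrightarrow> h y \<in> C \<and> y \<in> h y" by (meson bchoice)
  have "inj_on h E"
  proof (rule inj_onI)
    fix a b assume a: "a \<in> E" and b: "b \<in> E" and eq: "h a = h b"
    obtain J where J: "J \<in> join_cover X T n U" "h a \<subseteq> J"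
      using assms(4) h[OF a] unfolding refines_def by blast
    then have "bowen_dist T n a b < \<delta>"
      using h[OF a] h[OF b] eq by (intro bowen_dist_lt_join_cover[OF assms(1) J(1) assms(2)]) auto
    then show "a = b" using assms(5) a b unfolding separated_def by force
  qed
  with h show ?thesis by (intro that[of h]) auto
qed

lemma openin_closed_subspace_in_borel:
  assumes "closed X" and "openin (top_of_set X) A"
  shows "A \<in> sets borel"
proof -
  obtain G where "open G" "A = X \<inter> G" using assms(2) by (auto simp: openin_open)
  with assms(1) show ?thesis by (simp add: borel_closed borel_open sets.Int)
qed

definition bowen_cball :: "'a::metric_space set \<Rightarrow> ('a \<Rightarrow> 'a) \<Rightarrow> nat \<Rightarrow> real \<Rightarrow> 'a \<Rightarrow> 'a set" where
  "bowen_cball X T n \<delta> x = {y \<in> X. \<forall>i<n. dist ((T ^^ i) x) ((T ^^ i) y) \<le> \<delta>}"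

lemma birk_le_on_bowen_cball:
  assumes TX: "T ` X \<subseteq> X" and x: "x \<in> X" and y: "y \<in> bowen_cball X T n \<delta> x"
    and osc: "\<And>p q. p \<in> X \<Longrightarrow> q \<in> X \<Longrightarrow> dist p q \<le> \<delta> \<Longrightarrow> f q \<le> f p + \<eta>"
  shows "birk T f n y \<le> birk T f n x + real n * \<eta>"
proof -
  have "birk T f n y \<le> (\<Sum>i<n. f ((T ^^ i) x) + \<eta>)"
    unfolding birk_def using funpow_image_subset[OF TX] x y
    by (intro sum_mono osc) (auto simp: bowen_cball_def)
  then show ?thesis by (simp add: birk_def sum.distrib)
qed

lemma bowen_dist_gt_if_notin_bowen_cball:
  assumes "y \<in> X" and "y \<notin> bowen_cball X T n \<delta> x"
  shows "\<delta> < bowen_dist T n x y"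
proof -
  obtain i where i: "i < n" "\<delta> < dist ((T ^^ i) x) ((T ^^ i) y)"
    using assms unfolding bowen_cball_def by (auto simp: not_le)
  have "dist ((T ^^ i) x) ((T ^^ i) y) \<le> bowen_dist T n x y"
    unfolding bowen_dist_def using i(1) by (intro Max_ge) auto
  with i(2) show ?thesis by linarith
qed

lemma separated_insert:
  assumes "separated T n \<delta> E" and "\<And>x. x \<in> E \<Longrightarrow> \<delta> < bowen_dist T n x y"
  shows "separated T n \<delta> (insert y E)"
proof -
  have "bowen_dist T n y x = bowen_dist T n x y" for x
    unfolding bowen_dist_def by (simp add: dist_commute)
  then have "\<delta> < bowen_dist T n a b" if "a \<in> insert y E" "b \<in> insert y E" "a \<noteq> b" for a b
    using that assms unfolding separated_def by (metis insert_iff)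
  then show ?thesis unfolding separated_def by blast
qed

lemma bowen_cball_subset_join_cover:
  assumes TX: "T ` X \<subseteq> X" and x: "x \<in> X"
    and Leb: "\<And>z. z \<in> X \<Longrightarrow> \<exists>A\<in>U. X \<inter> cball z \<delta> \<subseteq> A"
  shows "\<exists>J\<in>join_cover X T n U. bowen_cball X T n \<delta> x \<subseteq> J"
proof -
  have "\<exists>A\<in>U. X \<inter> cball ((T ^^ i) x) \<delta> \<subseteq> A" for i
    using Leb funpow_image_subset[OF TX] x by blast
  then obtain g where g: "\<And>i. g i \<in> U \<and> X \<inter> cball ((T ^^ i) x) \<delta> \<subseteq> g i" by metis
  have "bowen_cball X T n \<delta> x \<subseteq> X \<inter> (\<Inter>i<n. preim X T i (g i))"
    using g funpow_image_subset[OF TX] unfolding bowen_cball_def preim_def by fastforce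
  moreover have "X \<inter> (\<Inter>i<n. preim X T i (g i)) \<in> join_cover X T n U"
    unfolding join_cover_def using g by blast
  ultimately show ?thesis by blast
qed

locale continuous_system =
  fixes X :: "'a::metric_space set" and T :: "'a \<Rightarrow> 'a" and f :: "'a \<Rightarrow> real"
  assumes compact_X: "compact X" and continuous_T: "continuous_on X T"
    and maps_X: "T ` X \<subseteq> X" and continuous_f: "continuous_on X f"
begin

lemma bdd_above_exp_birk:
  assumes "A \<subseteq> X"
  shows "bdd_above ((\<lambda>y. exp (birk T f n y)) ` A)"
proof -
  have "continuous_on X (\<lambda>y. exp (birk T f n y))"
    unfolding birk_def
    by (intro continuous_intros continuous_on_compose2[OF continuous_f]
        continuous_on_funpow[OF continuous_T maps_X] funpow_image_subset[OF maps_X])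
  then have "bounded ((\<lambda>y. exp (birk T f n y)) ` X)"
    by (intro compact_imp_bounded compact_continuous_image compact_X)
  then show ?thesis
    using assms by (meson bdd_above_mono bounded_imp_bdd_above image_mono)
qed

lemma sup_exp_upper:
  assumes "A \<subseteq> X" and "y \<in> A"
  shows "exp (birk T f n y) \<le> sup_exp T f n A"
  using assms bdd_above_exp_birk unfolding sup_exp_def by (auto intro: cSup_upper)

lemma sup_exp_nonneg:
  assumes "A \<subseteq> X"
  shows "0 \<le> sup_exp T f n A"
proof (cases "A = {}")
  case False
  then obtain y where "y \<in> A" by blast
  have "0 \<le> exp (birk T f n y)" by simp
  also have "\<dots> \<le> sup_exp T f n A" by (rule sup_exp_upper[OF assms \<open>y \<in> A\<close>])
  finally show ?thesis .
qed (simp add: sup_exp_def)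

lemma openin_preim:
  assumes "openin (top_of_set X) A"
  shows "openin (top_of_set X) (preim X T i A)"
proof -
  have "preim X T i A = X \<inter> (T ^^ i) -` A" unfolding preim_def by auto
  moreover have "T ^^ i \<in> X \<rightarrow> X" using funpow_image_subset[OF maps_X] by auto
  ultimately show ?thesis
    using assms continuous_on_funpow[OF continuous_T maps_X] continuous_on_open_gen by metis
qed

lemma join_cover_in_borel_covers:
  assumes U: "U \<in> open_covers X"
  shows "join_cover X T n U \<in> borel_covers X"
proof -
  have "J \<in> sets borel" if J_join: "J \<in> join_cover X T n U" for J
  proof -
    obtain g where J: "J = X \<inter> (\<Inter>i<n. preim X T i (g i))" and g: "\<forall>i<n. g i \<in> U"
      using J_join unfolding join_cover_def by auto
    have "openin (top_of_set X) ((\<Inter>i<n. preim X T i (g i)) \<inter> topspace (top_of_set X))"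
      using g U unfolding open_covers_def by (intro openin_INT openin_preim) auto
    then have "openin (top_of_set X) J" using J by (simp add: Int_commute)
    then show ?thesis
      by (rule openin_closed_subspace_in_borel[OF compact_imp_closed[OF compact_X]])
  qed
  moreover have "finite (join_cover X T n U)" "\<Union>(join_cover X T n U) = X"
    using U finite_join_cover join_cover_covers[OF maps_X] unfolding open_covers_def by auto
  ultimately show ?thesis unfolding borel_covers_def by auto
qed

lemma Pn_cov_le_sum:
  assumes "K \<subseteq> X" and "C \<in> borel_covers X" and "refines C (join_cover X T n U)"
  shows "Pn_cov X T f n U K \<le> (\<Sum>V\<in>C. sup_exp T f n (V \<inter> K))"
  unfolding Pn_cov_def
proof (rule cInf_lower)
  show "bdd_below {\<Sum>V\<in>C. sup_exp T f n (V \<inter> K) |C. C \<in> borel_covers X \<and> refines C (join_cover X T n U)}"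
    using assms(1) by (intro bdd_belowI[of _ 0]) (auto intro!: sum_nonneg sup_exp_nonneg)
qed (use assms in blast)

lemma le_Pn_cov:
  assumes "U \<in> open_covers X"
    and "\<And>C. C \<in> borel_covers X \<Longrightarrow> refines C (join_cover X T n U) \<Longrightarrow> c \<le> (\<Sum>V\<in>C. sup_exp T f n (V \<inter> K))"
  shows "c \<le> Pn_cov X T f n U K"
  unfolding Pn_cov_def
  using assms join_cover_in_borel_covers[OF assms(1)]
  by (intro cInf_greatest) (auto simp: refines_def)

lemma sum_separated_le_Pn_cov:
  assumes K: "K \<subseteq> X" and U: "U \<in> open_covers X" "fine_cover \<delta> U" and n: "n > 0"
    and E: "finite E" "E \<subseteq> K" "separated T n \<delta> E"
  shows "(\<Sum>y\<in>E. exp (birk T f n y)) \<le> Pn_cov X T f n U K"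
proof (rule le_Pn_cov[OF U(1)])
  fix C assume C: "C \<in> borel_covers X" "refines C (join_cover X T n U)"
  then have "E \<subseteq> \<Union>C" "finite C" "\<And>V. V \<in> C \<Longrightarrow> V \<subseteq> X"
    using E K unfolding borel_covers_def by auto
  obtain h where h: "inj_on h E" "h ` E \<subseteq> C" "\<And>y. y \<in> E \<Longrightarrow> y \<in> h y"
    using separated_inj_into_refinement[OF U(2) n \<open>E \<subseteq> \<Union>C\<close> C(2) E(3)] by blast
  have "(\<Sum>y\<in>E. exp (birk T f n y)) \<le> (\<Sum>y\<in>E. sup_exp T f n (h y \<inter> K))"
    using h(3) E(2) K by (intro sum_mono sup_exp_upper) auto
  also have "\<dots> = (\<Sum>V\<in>h ` E. sup_exp T f n (V \<inter> K))"
    by (simp add: sum.reindex[OF h(1)])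
  also have "\<dots> \<le> (\<Sum>V\<in>C. sup_exp T f n (V \<inter> K))"
    using h(2) K by (intro sum_mono2 \<open>finite C\<close> sup_exp_nonneg) auto
  finally show "(\<Sum>y\<in>E. exp (birk T f n y)) \<le> (\<Sum>V\<in>C. sup_exp T f n (V \<inter> K))" .
qed

lemma Pn_sep_le_Pn_cov:
  assumes "K \<subseteq> X" and "U \<in> open_covers X" "fine_cover \<delta> U" and "n > 0"
  shows "Pn_sep T f n \<delta> K \<le> Pn_cov X T f n U K"
  unfolding Pn_sep_def
proof (rule cSup_least)
  have "separated T n \<delta> {}" by (simp add: separated_def)
  then show "{\<Sum>x\<in>E. exp (birk T f n x) |E. finite E \<and> E \<subseteq> K \<and> separated T n \<delta> E} \<noteq> {}"
    by blast
qed (use sum_separated_le_Pn_cov[OF assms] in auto)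

lemma sum_separated_le_Pn_sep:
  assumes K: "K \<subseteq> X" and "\<delta> > 0" and "n > 0"
    and "finite E" "E \<subseteq> K" "separated T n \<delta> E"
  shows "(\<Sum>x\<in>E. exp (birk T f n x)) \<le> Pn_sep T f n \<delta> K"
proof -
  obtain U where U: "U \<in> open_covers X" "fine_cover \<delta> U"
    using ex_fine_open_cover[OF compact_X \<open>\<delta> > 0\<close>] by blast
  have "bdd_above {\<Sum>x\<in>E. exp (birk T f n x) |E. finite E \<and> E \<subseteq> K \<and> separated T n \<delta> E}"
    using sum_separated_le_Pn_cov[OF K U \<open>n > 0\<close>] by (intro bdd_aboveI[of _ "Pn_cov X T f n U K"]) auto
  then show ?thesis
    unfolding Pn_sep_def using assms by (intro cSup_upper) auto
qed

lemma Pn_sep_pos: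
  assumes "K \<subseteq> X" and "\<delta> > 0" and "n > 0" and "y \<in> K"
  shows "0 < Pn_sep T f n \<delta> K"
proof -
  have "separated T n \<delta> {y}" by (simp add: separated_def)
  then have "exp (birk T f n y) \<le> Pn_sep T f n \<delta> K"
    using sum_separated_le_Pn_sep[OF assms(1-3), of "{y}"] assms(4) by simp
  then show ?thesis using exp_gt_zero by (rule less_le_trans[rotated])
qed

lemma Pn_cov_pos:
  assumes K: "K \<subseteq> X" and U: "U \<in> open_covers X" and y: "y \<in> K"
  shows "0 < Pn_cov X T f n U K"
proof -
  have "exp (birk T f n y) \<le> Pn_cov X T f n U K"
  proof (rule le_Pn_cov[OF U])
    fix C assume "C \<in> borel_covers X"
    then have C: "finite C" "\<Union>C = X" "\<And>V. V \<in> C \<Longrightarrow> V \<subseteq> X"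
      unfolding borel_covers_def by auto
    then obtain V where V: "V \<in> C" "y \<in> V" using y K by blast
    have "exp (birk T f n y) \<le> sup_exp T f n (V \<inter> K)"
      using V y C(3) by (intro sup_exp_upper) auto
    also have "\<dots> \<le> (\<Sum>V\<in>C. sup_exp T f n (V \<inter> K))"
      using C V(1) by (intro member_le_sum sup_exp_nonneg) auto
    finally show "exp (birk T f n y) \<le> (\<Sum>V\<in>C. sup_exp T f n (V \<inter> K))" .
  qed
  then show ?thesis using exp_gt_zero by (rule less_le_trans[rotated])
qed

lemma card_separated_bounded:
  assumes "\<delta> > 0" and "n > 0"
  obtains N where "\<And>E. E \<subseteq> X \<Longrightarrow> separated T n \<delta> E \<Longrightarrow> card E \<le> N"
proof -
  obtain U where U: "U \<in> open_covers X" "fine_cover \<delta> U"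
    using ex_fine_open_cover[OF compact_X \<open>\<delta> > 0\<close>] by blast
  let ?J = "join_cover X T n U"
  have J: "finite ?J" "\<Union>?J = X" "refines ?J ?J"
    using join_cover_in_borel_covers[OF U(1)] unfolding borel_covers_def refines_def by auto
  have "card E \<le> card ?J" if E: "E \<subseteq> X" "separated T n \<delta> E" for E
  proof -
    have "E \<subseteq> \<Union>?J" using E(1) J(2) by simp
    then obtain h where "inj_on h E" "h ` E \<subseteq> ?J"
      by (rule separated_inj_into_refinement[OF U(2) \<open>n > 0\<close> _ J(3) E(2)])
    then show ?thesis by (rule card_inj_on_le[OF _ _ J(1)])
  qed
  then show ?thesis by (rule that)
qed

lemma ex_spanning_separated_set:
  assumes K: "K \<subseteq> X" and "\<delta> > 0" and "n > 0"
  obtains E where "finite E" "E \<subseteq> K" "separated T n \<delta> E"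
    and "K \<subseteq> (\<Union>x\<in>E. bowen_cball X T n \<delta> x)"
proof -
  let ?P = "\<lambda>E. finite E \<and> E \<subseteq> K \<and> separated T n \<delta> E"
  obtain N where N: "\<And>E. E \<subseteq> X \<Longrightarrow> separated T n \<delta> E \<Longrightarrow> card E \<le> N"
    using card_separated_bounded[OF assms(2,3)] by blast
  have "?P {}" by (simp add: separated_def)
  moreover have "\<forall>E. ?P E \<longrightarrow> card E < Suc N"
  proof (intro allI impI)
    fix E assume "?P E"
    then have "card E \<le> N" using K by (intro N) auto
    then show "card E < Suc N" by simp
  qed
  ultimately obtain E where E: "?P E" and E_max: "\<And>E'. ?P E' \<Longrightarrow> card E' \<le> card E"
    using ex_has_greatest_nat[of ?P "{}" card "Suc N"] by blast
  have "y \<in> (\<Union>x\<in>E. bowen_cball X T n \<delta> x)" if y: "y \<in> K" for y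
  proof (rule ccontr)
    assume uncovered: "y \<notin> (\<Union>x\<in>E. bowen_cball X T n \<delta> x)"
    have "y \<in> bowen_cball X T n \<delta> y" using y K \<open>\<delta> > 0\<close> unfolding bowen_cball_def by auto
    then have "y \<notin> E" using uncovered by blast
    have "\<delta> < bowen_dist T n x y" if "x \<in> E" for x
      using that uncovered y K by (intro bowen_dist_gt_if_notin_bowen_cball[of y X]) auto
    then have "separated T n \<delta> (insert y E)" using E by (intro separated_insert) auto
    then have "card (insert y E) \<le> card E" using E y by (intro E_max) auto
    with \<open>y \<notin> E\<close> E show False by simp
  qed
  with E show ?thesis by (intro that) auto
qed

lemma closed_bowen_cball: "closed (bowen_cball X T n \<delta> x)"
proof -
  have closed_X: "closed X" by (rule compact_imp_closed[OF compact_X])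
  have "closed (X \<inter> (T ^^ i) -` cball ((T ^^ i) x) \<delta>)" for i
    by (intro continuous_closed_preimage closed_X closed_cball
        continuous_on_funpow[OF continuous_T maps_X])
  then have "closed (X \<inter> (\<Inter>i<n. X \<inter> (T ^^ i) -` cball ((T ^^ i) x) \<delta>))"
    by (intro closed_Int closed_X closed_INT) auto
  moreover have "bowen_cball X T n \<delta> x = X \<inter> (\<Inter>i<n. X \<inter> (T ^^ i) -` cball ((T ^^ i) x) \<delta>)"
    unfolding bowen_cball_def by auto
  ultimately show ?thesis by simp
qed

text \<open>Refine the join by the Bowen balls around a spanning set E and by the
  remainders of the join elements; the remainders miss K and so contribute nothing.\<close>

lemma Pn_cov_le_sum_bowen_cball:
  assumes K: "K \<subseteq> X" and U: "U \<in> open_covers X"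
    and Leb: "\<And>z. z \<in> X \<Longrightarrow> \<exists>A\<in>U. X \<inter> cball z \<delta> \<subseteq> A"
    and E: "finite E" "E \<subseteq> X" and span: "K \<subseteq> (\<Union>x\<in>E. bowen_cball X T n \<delta> x)"
  shows "Pn_cov X T f n U K \<le> (\<Sum>x\<in>E. sup_exp T f n (bowen_cball X T n \<delta> x \<inter> K))"
proof -
  let ?J = "join_cover X T n U"
  let ?B = "bowen_cball X T n \<delta> ` E"
  let ?R = "(\<lambda>J. J - \<Union>?B) ` ?J"
  have J: "finite ?J" "\<Union>?J = X" "\<And>J. J \<in> ?J \<Longrightarrow> J \<in> sets borel"
    using join_cover_in_borel_covers[OF U] unfolding borel_covers_def by auto
  have B_borel: "A \<in> sets borel" if "A \<in> ?B" for A
    using that closed_bowen_cball borel_closed by blast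
  have "\<Union>?B \<in> sets borel" using E(1) B_borel by (intro sets.finite_Union) auto
  then have "?B \<union> ?R \<in> borel_covers X"
    using E(1) J B_borel unfolding borel_covers_def by (auto simp: bowen_cball_def)
  moreover have "refines (?B \<union> ?R) ?J"
    using bowen_cball_subset_join_cover[OF maps_X _ Leb] E(2) unfolding refines_def by blast
  ultimately have "Pn_cov X T f n U K \<le> (\<Sum>V\<in>?B \<union> ?R. sup_exp T f n (V \<inter> K))"
    by (rule Pn_cov_le_sum[OF K])
  also have "\<dots> = (\<Sum>V\<in>?B. sup_exp T f n (V \<inter> K))"
    using E(1) J(1) span by (intro sum.mono_neutral_right) (auto simp: sup_exp_def)
  also have "\<dots> \<le> (\<Sum>x\<in>E. sup_exp T f n (bowen_cball X T n \<delta> x \<inter> K))"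
    using K sum_image_le[OF E(1), of "\<lambda>V. sup_exp T f n (V \<inter> K)" "bowen_cball X T n \<delta>"]
    by (simp add: o_def sup_exp_nonneg le_infI2)
  finally show ?thesis .
qed

lemma Pn_cov_le_exp_Pn_sep:
  assumes K: "K \<subseteq> X" and U: "U \<in> open_covers X" and "\<delta> > 0" and "n > 0"
    and Leb: "\<And>z. z \<in> X \<Longrightarrow> \<exists>A\<in>U. X \<inter> cball z \<delta> \<subseteq> A"
    and osc: "\<And>p q. p \<in> X \<Longrightarrow> q \<in> X \<Longrightarrow> dist p q \<le> \<delta> \<Longrightarrow> f q \<le> f p + \<eta>"
  shows "Pn_cov X T f n U K \<le> exp (real n * \<eta>) * Pn_sep T f n \<delta> K"
proof -
  obtain E where E: "finite E" "E \<subseteq> K" "separated T n \<delta> E"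
    and span: "K \<subseteq> (\<Union>x\<in>E. bowen_cball X T n \<delta> x)"
    using ex_spanning_separated_set[OF K \<open>\<delta> > 0\<close> \<open>n > 0\<close>] by blast
  have "Pn_cov X T f n U K \<le> (\<Sum>x\<in>E. sup_exp T f n (bowen_cball X T n \<delta> x \<inter> K))"
    using E K by (intro Pn_cov_le_sum_bowen_cball[OF K U Leb E(1) _ span]) auto
  also have "\<dots> \<le> (\<Sum>x\<in>E. exp (real n * \<eta>) * exp (birk T f n x))"
  proof (intro sum_mono sup_exp_le)
    fix x y assume "x \<in> E" "y \<in> bowen_cball X T n \<delta> x \<inter> K"
    then have "birk T f n y \<le> birk T f n x + real n * \<eta>"
      using E(2) K by (intro birk_le_on_bowen_cball[OF maps_X _ _ osc]) auto
    then show "exp (birk T f n y) \<le> exp (real n * \<eta>) * exp (birk T f n x)"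
      by (simp add: mult_exp_exp add.commute)
  qed simp
  also have "\<dots> = exp (real n * \<eta>) * (\<Sum>x\<in>E. exp (birk T f n x))"
    by (simp add: sum_distrib_left)
  also have "\<dots> \<le> exp (real n * \<eta>) * Pn_sep T f n \<delta> K"
    using sum_separated_le_Pn_sep[OF K \<open>\<delta> > 0\<close> \<open>n > 0\<close> E] by simp
  finally show ?thesis .
qed

lemma limsup_Pn_sep_le_SUP_Pn_cov:
  assumes K: "\<And>n. K n \<subseteq> X" "\<And>n. K n \<noteq> {}" and "\<delta> > 0"
  shows "limsup (\<lambda>n. ereal (ln (Pn_sep T f n \<delta> (K n)) / real n))
    \<le> (SUP U\<in>open_covers X. limsup (\<lambda>n. ereal (ln (Pn_cov X T f n U (K n)) / real n)))"
proof -
  obtain U where U: "U \<in> open_covers X" "fine_cover \<delta> U"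
    using ex_fine_open_cover[OF compact_X \<open>\<delta> > 0\<close>] by blast
  have "\<forall>\<^sub>F n in sequentially. 0 < Pn_sep T f n \<delta> (K n) \<and> 0 < Pn_cov X T f n U (K n)
      \<and> Pn_sep T f n \<delta> (K n) \<le> exp (real n * 0) * Pn_cov X T f n U (K n)"
    using eventually_gt_at_top[of 0]
  proof eventually_elim
    case (elim n)
    obtain y where "y \<in> K n" using K(2) by blast
    then show ?case
      using Pn_sep_pos[OF K(1) \<open>\<delta> > 0\<close> elim] Pn_cov_pos[OF K(1) U(1)]
        Pn_sep_le_Pn_cov[OF K(1) U elim] by simp
  qed
  then have "limsup (\<lambda>n. ereal (ln (Pn_sep T f n \<delta> (K n)) / real n))
      \<le> ereal 0 + limsup (\<lambda>n. ereal (ln (Pn_cov X T f n U (K n)) / real n))"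
    by (rule limsup_ln_div_le)
  also have "\<dots> \<le> (SUP U\<in>open_covers X. limsup (\<lambda>n. ereal (ln (Pn_cov X T f n U (K n)) / real n)))"
    using SUP_upper[OF U(1), of "\<lambda>U. limsup (\<lambda>n. ereal (ln (Pn_cov X T f n U (K n)) / real n))"]
    by simp
  finally show ?thesis .
qed

lemma eventually_limsup_Pn_cov_le_Pn_sep:
  assumes K: "\<And>n. K n \<subseteq> X" "\<And>n. K n \<noteq> {}" and U: "U \<in> open_covers X" and "\<eta> > 0"
  shows "\<forall>\<^sub>F \<delta> in at_right 0. limsup (\<lambda>n. ereal (ln (Pn_cov X T f n U (K n)) / real n))
    \<le> ereal \<eta> + limsup (\<lambda>n. ereal (ln (Pn_sep T f n \<delta> (K n)) / real n))"
proof -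
  obtain e where "e > 0" and e: "\<And>z. z \<in> X \<Longrightarrow> \<exists>A\<in>U. X \<inter> ball z e \<subseteq> A"
    using open_cover_Lebesgue_number[OF compact_X U] by blast
  obtain d where "d > 0" and d: "\<And>p q. p \<in> X \<Longrightarrow> q \<in> X \<Longrightarrow> dist q p < d \<Longrightarrow> dist (f q) (f p) < \<eta>"
    using compact_uniformly_continuous[OF continuous_f compact_X] \<open>\<eta> > 0\<close>
    unfolding uniformly_continuous_on_def by metis
  have "limsup (\<lambda>n. ereal (ln (Pn_cov X T f n U (K n)) / real n))
      \<le> ereal \<eta> + limsup (\<lambda>n. ereal (ln (Pn_sep T f n \<delta> (K n)) / real n))"
    if \<delta>: "0 < \<delta>" "\<delta> < min e d" for \<delta>
  proof (rule limsup_ln_div_le)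
    have Leb: "\<exists>A\<in>U. X \<inter> cball z \<delta> \<subseteq> A" if "z \<in> X" for z
    proof -
      have "X \<inter> cball z \<delta> \<subseteq> X \<inter> ball z e" using \<delta> by auto
      with e[OF that] show ?thesis by blast
    qed
    have osc: "f q \<le> f p + \<eta>" if "p \<in> X" "q \<in> X" "dist p q \<le> \<delta>" for p q
      using d[OF that(1,2)] that(3) \<delta> by (auto simp: dist_commute dist_real_def)
    show "\<forall>\<^sub>F n in sequentially. 0 < Pn_cov X T f n U (K n) \<and> 0 < Pn_sep T f n \<delta> (K n)
        \<and> Pn_cov X T f n U (K n) \<le> exp (real n * \<eta>) * Pn_sep T f n \<delta> (K n)"
      using eventually_gt_at_top[of 0]
    proof eventually_elim
      case (elim n)
      obtain y where "y \<in> K n" using K(2) by blast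
      then show ?case
        using Pn_sep_pos[OF K(1) \<delta>(1) elim] Pn_cov_pos[OF K(1) U]
          Pn_cov_le_exp_Pn_sep[OF K(1) U \<delta>(1) elim Leb osc] by simp
    qed
  qed
  then show ?thesis
    unfolding eventually_at_right_field using \<open>e > 0\<close> \<open>d > 0\<close>
    by (intro exI[of _ "min e d"]) auto
qed

end

theorem lemma3p2:
  fixes X :: "'a::metric_space set" and T :: "'a \<Rightarrow> 'a" and f :: "'a \<Rightarrow> real"
    and x :: 'a and \<epsilon> :: real
  assumes "TDS X T" and "continuous_on X f" and "x \<in> X" and "\<epsilon> > 0"
  shows "Ps X T f x \<epsilon> =
    (SUP U\<in>open_covers X. limsup (\<lambda>n. ereal (ln (Pn_cov X T f n U (preim X T n (stable_set X T \<epsilon> x))) / real n)))"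
proof -
  obtain g where "compact X" and hom: "homeomorphism X X T g"
    using assms(1) unfolding TDS_def by blast
  then interpret continuous_system X T f
    using assms(2) by unfold_locales (auto simp: homeomorphism_def)
  define K where "K n = preim X T n (stable_set X T \<epsilon> x)" for n
  have K_sub: "K n \<subseteq> X" for n unfolding K_def preim_def by auto
  have K_ne: "K n \<noteq> {}" for n
  proof -
    have "x \<in> (T ^^ n) ` X" using hom assms(3) funpow_image_eq by (metis homeomorphism_def)
    moreover have "x \<in> stable_set X T \<epsilon> x" using assms(3,4) unfolding stable_set_def by auto
    ultimately show ?thesis unfolding K_def preim_def by auto
  qed
  have "((\<lambda>\<delta>. limsup (\<lambda>n. ereal (ln (Pn_sep T f n \<delta> (K n)) / real n)))
      \<longlongrightarrow> (SUP U\<in>open_covers X. limsup (\<lambda>n. ereal (ln (Pn_cov X T f n U (K n)) / real n)))) (at_right 0)"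
    by (rule tendsto_at_right_zero_SUP[OF limsup_Pn_sep_le_SUP_Pn_cov[OF K_sub K_ne]
          eventually_limsup_Pn_cov_le_Pn_sep[OF K_sub K_ne]])
  then show ?thesis
    unfolding Ps_def K_def by (rule tendsto_Lim[OF trivial_limit_at_right_real])
qed

end
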